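(* For every odd integer $\ell\ge 7$ there exists a binary palindrome of length $\ell$ whose critical exponent is exactly $\tfrac{7}{3}$.
   Context: A word $x=x[1..n]$ has period $q$ if $x[i]=x[i+q]$ for $1\le i\le n-q$. For integers $p>q\ge1$, $x$ is a $(p/q)$-power if it has length $p$ and period $q$. The exponent $\exp(w)$ of a finite nonempty word $w$ is the largest rational $p/q$ such that $w$ is a $(p/q)$-power (with $w$ of length $p$ and period $q$, $1\le q\le p$). The critical exponent of $w$ is the maximum of $\exp(w')$ over all nonempty factors $w'$ of $w$. A palindrome is a word equal to its reversal. *)

theory Defs
  imports Complex_Main "HOL-Library.Sublist"
begin

definition has_period :: "'a list \<Rightarrow> nat \<Rightarrow> bool" where
  "has_period x q \<longleftrightarrow> (\<forall>i. i + q < length x \<longrightarrow> x ! i = x ! (i + q))"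

definition word_exp :: "'a list \<Rightarrow> rat" where
  "word_exp w = Max {of_nat (length w) / of_nat q | q. 1 \<le> q \<and> q \<le> length w \<and> has_period w q}"

definition crit_exp :: "'a list \<Rightarrow> rat" where
  "crit_exp w = Max {word_exp u | u. u \<noteq> [] \<and> sublist u w}"

definition palindrome :: "'a list \<Rightarrow> bool" where
  "palindrome w \<longleftrightarrow> rev w = w"

end

theory Submission
  imports Defs
begin

text \<open>The witness of length \<open>2n + 1\<close> is the factor \<open>t(6 + |k|)\<close>, \<open>-n \<le> k \<le> n\<close>, of the
  Thue--Morse word \<open>t\<close> read backwards and forwards from \<open>t(6)\<close>; its central factor
  \<open>0110110\<close> has exponent 7/3. Conversely, let a factor of length \<open>L\<close> have period \<open>q\<close>.
  If it lies on one side of the centre, then \<open>L \<le> 2q\<close> since \<open>t\<close> is overlap-free. Otherwise,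
  by symmetry, its longer half is a factor of \<open>t\<close> and so has length at most \<open>2q\<close>. For
  \<open>q \<le> 44\<close> the factor lies within distance 88 of the centre and \<open>3L \<le> 7q\<close> is checked by
  computation. For \<open>q > 44\<close> and \<open>3L > 7q\<close> the factor contains the seven letters on each side
  of the centre together with their partners at distance \<open>q\<close>; since a factor of \<open>t\<close> of
  length 7 determines its position modulo 4, the right side forces \<open>q \<equiv> 0\<close> and the
  reversed left side forces \<open>q \<equiv> 3 (mod 4)\<close>.\<close>

lemma finite_exponents:
  "finite {of_nat (length u) / of_nat q :: rat | q. 1 \<le> q \<and> q \<le> length u \<and> has_period u q}"
  by (rule finite_subset[of _ "(\<lambda>q. of_nat (length u) / of_nat q) ` {..length u}"]) auto

lemma word_exp_ge:
  assumes "1 \<le> q" "q \<le> length u" "has_period u q"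
  shows "of_nat (length u) / of_nat q \<le> word_exp u"
  unfolding word_exp_def using assms by (intro Max_ge[OF finite_exponents]) blast

lemma word_exp_le:
  assumes "u \<noteq> []"
    and "\<And>q. 1 \<le> q \<Longrightarrow> q \<le> length u \<Longrightarrow> has_period u q \<Longrightarrow> of_nat (length u) / of_nat q \<le> r"
  shows "word_exp u \<le> r"
proof -
  have "has_period u (length u)" by (simp add: has_period_def)
  moreover have "1 \<le> length u" using assms(1) by (simp add: Suc_le_eq)
  ultimately show ?thesis
    unfolding word_exp_def using assms(2) by (intro Max.boundedI[OF finite_exponents]) auto
qed

lemma crit_exp_eqI:
  assumes bound: "\<And>u q. sublist u w \<Longrightarrow> 1 \<le> q \<Longrightarrow> q \<le> length u \<Longrightarrow> has_period u q
      \<Longrightarrow> of_nat (length u) / of_nat q \<le> r"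
    and witness: "sublist v w" "1 \<le> q" "q \<le> length v" "has_period v q"
      "of_nat (length v) / of_nat q = r"
  shows "crit_exp w = r"
  unfolding crit_exp_def
proof (rule Max_eqI)
  show "finite {word_exp u | u. u \<noteq> [] \<and> sublist u w}"
    by (rule finite_subset[of _ "word_exp ` set (sublists w)"]) auto
  show "e \<le> r" if "e \<in> {word_exp u | u. u \<noteq> [] \<and> sublist u w}" for e
    using that bound word_exp_le by blast
  have "word_exp v = r"
    using word_exp_ge[OF witness(2-4)] word_exp_le[of v r] bound[OF witness(1)] witness by force
  moreover have "v \<noteq> []" using witness(2,3) by auto
  ultimately show "r \<in> {word_exp u | u. u \<noteq> [] \<and> sublist u w}" using witness(1) by blast
qed

lemma of_nat_divide_le_of_cross_mult:
  assumes "a * m \<le> b * n" "0 < a" "0 < n"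
  shows "(of_nat m / of_nat n :: 'a :: linordered_field) \<le> of_nat b / of_nat a"
proof -
  have "(of_nat a * of_nat m :: 'a) \<le> of_nat b * of_nat n"
    by (metis assms(1) of_nat_le_iff of_nat_mult)
  then show ?thesis using assms(2,3) by (simp add: divide_le_eq le_divide_eq mult.commute)
qed

section \<open>The Thue--Morse word\<close>

fun thue_morse :: "nat \<Rightarrow> bool" where
  "thue_morse n = (if n = 0 then False else thue_morse (n div 2) \<noteq> odd n)"

declare thue_morse.simps [simp del]

lemma thue_morse_div2: "thue_morse n = (thue_morse (n div 2) \<noteq> odd n)"
  by (cases "n = 0") (simp_all add: thue_morse.simps[of n] thue_morse.simps[of 0])

lemma thue_morse_add_double: "thue_morse (n + 2 * i) = (thue_morse (n div 2 + i) \<noteq> odd n)"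
  using thue_morse_div2[of "n + 2 * i"] by (simp add: add.commute)

lemma thue_morse_even_Suc: "even n \<Longrightarrow> thue_morse (Suc n) = (\<not> thue_morse n)"
  using thue_morse_div2[of "Suc n"] thue_morse_div2[of n] by (auto elim!: evenE)

lemma thue_morse_no_triple:
  "\<not> (thue_morse n = thue_morse (n + 1) \<and> thue_morse (n + 1) = thue_morse (n + 2))"
  using thue_morse_even_Suc[of n] thue_morse_even_Suc[of "Suc n"] by (cases "even n") auto

lemma thue_morse_quadruple:
  assumes "r < 4"
  shows "thue_morse (4 * b + r) = (thue_morse b = (r = 0 \<or> r = 3))"
proof -
  have "thue_morse (4 * b + r) = ((thue_morse b \<noteq> odd (r div 2)) \<noteq> odd r)"
    using thue_morse_add_double[of r "2 * b"] thue_morse_add_double[of "r div 2" b] assms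
    by (simp add: algebra_simps)
  moreover have "r = 0 \<or> r = 1 \<or> r = 2 \<or> r = 3" using assms by auto
  ultimately show ?thesis by auto
qed

definition tm_block :: "bool \<Rightarrow> bool \<Rightarrow> bool \<Rightarrow> bool list" where
  "tm_block x y z = [x, \<not> x, \<not> x, x, y, \<not> y, \<not> y, y, z, \<not> z, \<not> z, z]"

lemma thue_morse_block:
  assumes "i \<le> 8"
  shows "thue_morse (m + i) =
    tm_block (thue_morse (m div 4)) (thue_morse (m div 4 + 1)) (thue_morse (m div 4 + 2)) ! (m mod 4 + i)"
proof -
  define j where "j = m mod 4 + i"
  have "m + i = 4 * (m div 4 + j div 4) + j mod 4" unfolding j_def by simp
  then have t: "thue_morse (m + i) = (thue_morse (m div 4 + j div 4) = (j mod 4 = 0 \<or> j mod 4 = 3))"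
    using thue_morse_quadruple[of "j mod 4" "m div 4 + j div 4"] by simp
  have "j < 12" unfolding j_def using assms by simp
  then have "j = 0 \<or> j = 1 \<or> j = 2 \<or> j = 3 \<or> j = 4 \<or> j = 5 \<or> j = 6 \<or> j = 7 \<or> j = 8
      \<or> j = 9 \<or> j = 10 \<or> j = 11" by presburger
  then show ?thesis unfolding t j_def[symmetric] by (elim disjE) (simp_all add: tm_block_def)
qed

lemma tm_block_offset_unique:
  assumes "r < 4" "r' < 4" "\<not> (x = y \<and> y = z)" "\<not> (x' = y' \<and> y' = z')"
    and "\<And>i. i < 7 \<Longrightarrow> tm_block x y z ! (r + i) = tm_block x' y' z' ! (r' + i)"
  shows "r = r'"
proof (rule ccontr)
  assume "r \<noteq> r'"
  moreover have "r = 0 \<or> r = 1 \<or> r = 2 \<or> r = 3" "r' = 0 \<or> r' = 1 \<or> r' = 2 \<or> r' = 3"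
    using assms(1,2) by auto
  moreover note assms(5)[of 0] assms(5)[of 1] assms(5)[of 2] assms(5)[of 3] assms(5)[of 4]
    assms(5)[of 5] assms(5)[of 6]
  ultimately show False using assms(3,4)
    by (elim disjE; hypsubst; simp (no_asm_use) add: tm_block_def; argo)
qed

lemma tm_block_reversed_offset:
  assumes "r < 4" "r' < 4" "\<not> (x = y \<and> y = z)" "\<not> (x' = y' \<and> y' = z')"
    and "\<And>i. i < 7 \<Longrightarrow> tm_block x y z ! (r + i) = tm_block x' y' z' ! (r' + (6 - i))"
  shows "(r + r' + 3) mod 4 = 0"
proof (rule ccontr)
  assume "(r + r' + 3) mod 4 \<noteq> 0"
  moreover have "r = 0 \<or> r = 1 \<or> r = 2 \<or> r = 3" "r' = 0 \<or> r' = 1 \<or> r' = 2 \<or> r' = 3"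
    using assms(1,2) by auto
  moreover note assms(5)[of 0] assms(5)[of 1] assms(5)[of 2] assms(5)[of 3] assms(5)[of 4]
    assms(5)[of 5] assms(5)[of 6]
  ultimately show False using assms(3,4)
    by (elim disjE; hypsubst; simp (no_asm_use) add: tm_block_def; argo)
qed

lemma thue_morse_window_mod4:
  assumes "\<And>i. i < 7 \<Longrightarrow> thue_morse (m + i) = thue_morse (n + i)"
  shows "m mod 4 = n mod 4"
proof (rule tm_block_offset_unique[OF _ _ thue_morse_no_triple thue_morse_no_triple])
  fix i :: nat assume "i < 7"
  then show "tm_block (thue_morse (m div 4)) (thue_morse (m div 4 + 1)) (thue_morse (m div 4 + 2))
      ! (m mod 4 + i) =
    tm_block (thue_morse (n div 4)) (thue_morse (n div 4 + 1)) (thue_morse (n div 4 + 2))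
      ! (n mod 4 + i)"
    using assms[of i] thue_morse_block[of i m] thue_morse_block[of i n] by simp
qed simp_all

lemma thue_morse_reversed_window_mod4:
  assumes "\<And>i. i < 7 \<Longrightarrow> thue_morse (m + i) = thue_morse (n + (6 - i))"
  shows "(m + n + 3) mod 4 = 0"
proof -
  have "(m mod 4 + n mod 4 + 3) mod 4 = 0"
  proof (rule tm_block_reversed_offset[OF _ _ thue_morse_no_triple thue_morse_no_triple])
    fix i :: nat assume "i < 7"
    then show "tm_block (thue_morse (m div 4)) (thue_morse (m div 4 + 1)) (thue_morse (m div 4 + 2))
        ! (m mod 4 + i) =
      tm_block (thue_morse (n div 4)) (thue_morse (n div 4 + 1)) (thue_morse (n div 4 + 2))
        ! (n mod 4 + (6 - i))"
      using assms[of i] thue_morse_block[of i m] thue_morse_block[of "6 - i" n] by simp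
  qed simp_all
  then show ?thesis by presburger
qed

lemma thue_morse_overlap_halve:
  assumes "\<forall>i\<le>2 * h. thue_morse (n + i) = thue_morse (n + i + 2 * h)"
  shows "\<forall>i\<le>h. thue_morse (n div 2 + i) = thue_morse (n div 2 + i + h)"
proof (intro allI impI)
  fix i assume "i \<le> h"
  then have "thue_morse (n + 2 * i) = thue_morse (n + 2 * (i + h))"
    using assms[rule_format, of "2 * i"] by (simp add: algebra_simps)
  then show "thue_morse (n div 2 + i) = thue_morse (n div 2 + i + h)"
    unfolding thue_morse_add_double by (metis (full_types) add.assoc)
qed

lemma thue_morse_odd_overlap_alternates:
  assumes "odd q" "\<forall>i\<le>q. thue_morse (n + i) = thue_morse (n + i + q)" "k < 2 * q"
  shows "thue_morse (Suc (n + k)) = (\<not> thue_morse (n + k))"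
proof (cases "even (n + k)")
  case True
  then show ?thesis by (rule thue_morse_even_Suc)
next
  case False
  show ?thesis
  proof (cases "k < q")
    case True
    with False assms(1) have "thue_morse (Suc (n + k + q)) = (\<not> thue_morse (n + k + q))"
      by (intro thue_morse_even_Suc) simp
    moreover have "thue_morse (n + k) = thue_morse (n + k + q)"
      "thue_morse (n + Suc k) = thue_morse (n + Suc k + q)"
      using assms(2)[rule_format, of k] assms(2)[rule_format, of "Suc k"] True by simp_all
    ultimately show ?thesis by simp
  next
    case k: False
    define j where "j = k - q"
    have j: "k = j + q" "j < q" using k assms(3) unfolding j_def by auto
    with False assms(1) have "thue_morse (Suc (n + j)) = (\<not> thue_morse (n + j))"
      by (intro thue_morse_even_Suc) simp
    moreover have "thue_morse (n + j) = thue_morse (n + j + q)"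
      "thue_morse (n + Suc j) = thue_morse (n + Suc j + q)"
      using assms(2)[rule_format, of j] assms(2)[rule_format, of "Suc j"] j(2) by simp_all
    ultimately show ?thesis using j(1) by (simp add: add.assoc)
  qed
qed

lemma thue_morse_overlap_free:
  "0 < q \<Longrightarrow> \<not> (\<forall>i\<le>q. thue_morse (n + i) = thue_morse (n + i + q))"
proof (induction q arbitrary: n rule: less_induct)
  case (less q)
  show ?case
  proof
    assume overlap: "\<forall>i\<le>q. thue_morse (n + i) = thue_morse (n + i + q)"
    show False
    proof (cases "even q")
      case True
      then obtain h where "q = 2 * h" by (rule evenE)
      then show False
        using less.IH[of h "n div 2"] less.prems thue_morse_overlap_halve overlap by auto
    next
      case odd: False
      show False
      proof (cases "q = 1")
        case True
        then show False using overlap[rule_format, of 0] overlap[rule_format, of 1]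
          thue_morse_no_triple[of n] by simp
      next
        case False
        with odd less.prems have "3 \<le> q" by presburger
        \<comment> \<open>An odd period makes \<open>t\<close> alternate from \<open>n\<close> on, so \<open>t(n) = t(n+2) = t(n+4)\<close>,
          and halving yields three equal consecutive letters.\<close>
        have alt: "thue_morse (Suc (n + k)) = (\<not> thue_morse (n + k))" if "k < 4" for k
          using thue_morse_odd_overlap_alternates[OF odd overlap] that \<open>3 \<le> q\<close> by simp
        have "thue_morse (n + 2 * 0) = thue_morse (n + 2 * 1)"
          "thue_morse (n + 2 * 1) = thue_morse (n + 2 * 2)"
          using alt[of 0] alt[of 1] alt[of 2] alt[of 3] by (simp_all add: numeral_eq_Suc)
        then show False
          unfolding thue_morse_add_double using thue_morse_no_triple[of "n div 2"] by simp argo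
      qed
    qed
  qed
qed

section \<open>The mirrored Thue--Morse sequence\<close>

definition tm_mirror :: "int \<Rightarrow> bool" where
  "tm_mirror k = thue_morse (6 + nat \<bar>k\<bar>)"

lemma tm_mirror_uminus: "tm_mirror (- k) = tm_mirror k"
  by (simp add: tm_mirror_def)

lemma tm_mirror_of_nat: "tm_mirror (int k) = thue_morse (6 + k)"
  by (simp add: tm_mirror_def)

definition period_on :: "(int \<Rightarrow> 'a) \<Rightarrow> int \<Rightarrow> nat \<Rightarrow> nat \<Rightarrow> bool" where
  "period_on f s L q \<longleftrightarrow> (\<forall>k. s \<le> k \<and> k + int q < s + int L \<longrightarrow> f k = f (k + int q))"

lemma period_onD: "period_on f s L q \<Longrightarrow> s \<le> k \<Longrightarrow> k + int q < s + int L \<Longrightarrow> f k = f (k + int q)"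
  unfolding period_on_def by blast

lemma period_on_subinterval:
  assumes "period_on f s L q" "s \<le> s'" "s' + int L' \<le> s + int L"
  shows "period_on f s' L' q"
  unfolding period_on_def
proof (intro allI impI)
  fix k assume "s' \<le> k \<and> k + int q < s' + int L'"
  with assms(2,3) show "f k = f (k + int q)" by (intro period_onD[OF assms(1)]) linarith+
qed

lemma period_on_reflect:
  assumes "\<And>k. f (- k) = f k" "period_on f s L q"
  shows "period_on f (1 - s - int L) L q"
  unfolding period_on_def
proof (intro allI impI)
  fix k assume "1 - s - int L \<le> k \<and> k + int q < 1 - s - int L + int L"
  then have "f (- (k + int q)) = f (- (k + int q) + int q)"
    by (intro period_onD[OF assms(2)]) linarith+
  moreover have "- (k + int q) + int q = - k" by simp
  ultimately show "f k = f (k + int q)" by (simp only: assms(1))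
qed

lemma tm_mirror_period_on_positive:
  assumes "period_on tm_mirror s L q" "0 < q" "0 < s"
  shows "L \<le> 2 * q"
proof (rule ccontr)
  assume "\<not> L \<le> 2 * q"
  have "thue_morse (6 + nat s + i) = thue_morse (6 + nat s + i + q)" if "i \<le> q" for i
  proof -
    have "tm_mirror (s + int i) = tm_mirror (s + int i + int q)"
      using that \<open>\<not> L \<le> 2 * q\<close> by (intro period_onD[OF assms(1)]) linarith+
    moreover have "s + int i = int (nat s + i)" "s + int i + int q = int (nat s + i + q)"
      using assms(3) by simp_all
    ultimately show ?thesis by (simp only: tm_mirror_of_nat add.assoc)
  qed
  then show False using thue_morse_overlap_free[OF assms(2)] by blast
qed

text \<open>\<open>true_runs_below k c xs\<close>: every block of consecutive \<open>True\<close>s in \<open>xs\<close> is shorter than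
  \<open>k\<close>, where the first block is taken to be preceded by \<open>c\<close> further \<open>True\<close>s.\<close>

fun true_runs_below :: "nat \<Rightarrow> nat \<Rightarrow> bool list \<Rightarrow> bool" where
  "true_runs_below k c [] = True"
| "true_runs_below k c (x # xs) =
     (if x then Suc c < k \<and> true_runs_below k (Suc c) xs else true_runs_below k 0 xs)"

lemma true_runs_below_prefix:
  "true_runs_below k c xs \<Longrightarrow> 0 < m \<Longrightarrow> m \<le> length xs \<Longrightarrow> \<forall>d<m. xs ! d \<Longrightarrow> c + m < k"
proof (induction xs arbitrary: c m)
  case Nil
  then show ?case by simp
next
  case (Cons x xs)
  then have "x" "Suc c < k" "true_runs_below k (Suc c) xs" by (auto split: if_splits)
  show ?case
  proof (cases "m = 1")
    case True
    then show ?thesis using \<open>Suc c < k\<close> by simp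
  next
    case False
    have "Suc c + (m - 1) < k"
    proof (rule Cons.IH[OF \<open>true_runs_below k (Suc c) xs\<close>])
      show "0 < m - 1" "m - 1 \<le> length xs" using False Cons.prems(2,3) by auto
      show "\<forall>d<m - 1. xs ! d" using Cons.prems(4) by (metis less_diff_conv nth_Cons_Suc Suc_eq_plus1)
    qed
    then show ?thesis using Cons.prems(2) by simp
  qed
qed

lemma true_runs_below_drop: "true_runs_below k c xs \<Longrightarrow> \<exists>c'. true_runs_below k c' (drop b xs)"
proof (induction xs arbitrary: c b)
  case Nil
  then show ?case by auto
next
  case (Cons x xs)
  then show ?case by (cases b) (auto split: if_splits)
qed

lemma true_runs_below_run:
  assumes "true_runs_below k c xs" "0 < m" "b + m \<le> length xs" "\<forall>d<m. xs ! (b + d)"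
  shows "m < k"
proof -
  obtain c' where "true_runs_below k c' (drop b xs)" using true_runs_below_drop[OF assms(1)] ..
  then have "c' + m < k" using assms(2-4) by (intro true_runs_below_prefix) auto
  then show ?thesis by simp
qed

lemma period_on_run_bound:
  assumes "period_on f s L q" "q < L"
    and "true_runs_below k c (map2 (=) xs (drop q xs))"
    and "\<And>i. i < length xs \<Longrightarrow> xs ! i = f (a + int i)"
    and "a \<le> s" "s + int L \<le> a + int (length xs)"
  shows "L - q < k"
proof (rule true_runs_below_run[OF assms(3)])
  define b where "b = nat (s - a)"
  have b: "s = a + int b" "b + L \<le> length xs" using assms(5,6) unfolding b_def by linarith+
  then show "b + (L - q) \<le> length (map2 (=) xs (drop q xs))" using assms(2) by simp
  show "\<forall>d<L - q. map2 (=) xs (drop q xs) ! (b + d)"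
  proof (intro allI impI)
    fix d assume "d < L - q"
    then have "b + d + q < length xs" "f (s + int d) = f (s + int d + int q)"
      using b by (auto intro!: period_onD[OF assms(1)])
    then show "map2 (=) xs (drop q xs) ! (b + d)" using assms(4) b(1) by (simp add: ac_simps)
  qed
qed (use assms(2) in simp)

definition tm_mirror_window :: "bool list" where
  "tm_mirror_window = map (\<lambda>i. tm_mirror (int i - 88)) [0..<177]"

lemma length_tm_mirror_window: "length tm_mirror_window = 177"
  by (simp add: tm_mirror_window_def)

lemma nth_tm_mirror_window: "i < 177 \<Longrightarrow> tm_mirror_window ! i = tm_mirror (- 88 + int i)"
  by (simp add: tm_mirror_window_def)

lemma tm_mirror_window_runs:
  "list_all (\<lambda>q. true_runs_below (7 * q div 3 + 1 - q) 0
     (map2 (=) tm_mirror_window (drop q tm_mirror_window))) [1..<45]"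
  by code_simp

lemma tm_mirror_period_on_small:
  assumes "period_on tm_mirror s L q" "0 < q" "q \<le> 44" "-88 \<le> s" "s + int L \<le> 89"
  shows "3 * L \<le> 7 * q"
proof (rule ccontr)
  assume "\<not> 3 * L \<le> 7 * q"
  moreover have "true_runs_below (7 * q div 3 + 1 - q) 0
      (map2 (=) tm_mirror_window (drop q tm_mirror_window))"
    using tm_mirror_window_runs assms(2,3) unfolding list_all_iff by auto
  ultimately have "L - q < 7 * q div 3 + 1 - q"
    using assms(4,5)
    by (intro period_on_run_bound[OF assms(1), of _ _ tm_mirror_window "-88"])
      (simp_all add: length_tm_mirror_window nth_tm_mirror_window)
  moreover have "7 * q div 3 * 3 \<le> 7 * q" by (rule div_times_less_eq_dividend)
  ultimately show False using \<open>\<not> 3 * L \<le> 7 * q\<close> by linarith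
qed

lemma tm_mirror_period_on_straddling_large:
  assumes "period_on tm_mirror s L q" "44 < q" "s \<le> 0" "- s \<le> s + int L - 1"
    and "s + int L \<le> 2 * int q + 1"
  shows "3 * L \<le> 7 * q"
proof (rule ccontr)
  assume "\<not> 3 * L \<le> 7 * q"
  then have far: "int q + 8 \<le> s + int L" "s \<le> - 7" using assms(2-5) by linarith+
  have "7 mod 4 = (7 + q) mod 4"
  proof (rule thue_morse_window_mod4)
    fix i :: nat assume "i < 7"
    then have "tm_mirror (int (1 + i)) = tm_mirror (int (1 + i) + int q)"
      using far assms(3) by (intro period_onD[OF assms(1)]) linarith+
    then show "thue_morse (7 + i) = thue_morse (7 + q + i)"
      by (simp only: tm_mirror_of_nat flip: of_nat_add) (simp add: ac_simps)
  qed
  moreover have "(q - 1 + 7 + 3) mod 4 = 0"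
  proof (rule thue_morse_reversed_window_mod4)
    fix i :: nat assume "i < 7"
    then have "tm_mirror (- int (7 - i)) = tm_mirror (- int (7 - i) + int q)"
      using far by (intro period_onD[OF assms(1)]) linarith+
    moreover have "- int (7 - i) + int q = int (q - 1 + i - 6)" using \<open>i < 7\<close> assms(2) by simp
    ultimately show "thue_morse (q - 1 + i) = thue_morse (7 + (6 - i))"
      using \<open>i < 7\<close> assms(2) by (simp only: tm_mirror_uminus tm_mirror_of_nat) simp
  qed
  ultimately show False using assms(2) by presburger
qed

lemma tm_mirror_period_on_straddling:
  assumes "period_on tm_mirror s L q" "0 < q" "s \<le> 0" "- s \<le> s + int L - 1"
  shows "3 * L \<le> 7 * q"
proof -
  have "period_on tm_mirror 1 (nat (s + int L - 1)) q"
    using assms(3,4) by (intro period_on_subinterval[OF assms(1)]) linarith+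
  then have right: "s + int L \<le> 2 * int q + 1"
    using tm_mirror_period_on_positive assms(2-4) by fastforce
  show ?thesis
  proof (cases "q \<le> 44")
    case True
    with right assms(3,4) show ?thesis by (intro tm_mirror_period_on_small[OF assms(1,2)]) linarith+
  next
    case False
    with right assms(3,4) show ?thesis
      by (intro tm_mirror_period_on_straddling_large[OF assms(1)]) linarith+
  qed
qed

lemma tm_mirror_period_bound:
  assumes "period_on tm_mirror s L q" "0 < q"
  shows "3 * L \<le> 7 * q"
proof -
  have reflected: "period_on tm_mirror (1 - s - int L) L q"
    using period_on_reflect[OF tm_mirror_uminus assms(1)] .
  consider "0 < s" | "s + int L < 1" | "s \<le> 0" "- s \<le> s + int L - 1"
    | "0 \<le> s + int L - 1" "s + int L - 1 < - s"
    by linarith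
  then show ?thesis
  proof cases
    case 1
    then show ?thesis using tm_mirror_period_on_positive[OF assms] by linarith
  next
    case 2
    then show ?thesis using tm_mirror_period_on_positive[OF reflected assms(2)] by linarith
  next
    case 3
    then show ?thesis using tm_mirror_period_on_straddling[OF assms] by blast
  next
    case 4
    then show ?thesis using tm_mirror_period_on_straddling[OF reflected assms(2)] by linarith
  qed
qed

definition tm_palindrome :: "nat \<Rightarrow> bool list" where
  "tm_palindrome n = map (\<lambda>i. tm_mirror (int i - int n)) [0..<2 * n + 1]"

lemma length_tm_palindrome [simp]: "length (tm_palindrome n) = 2 * n + 1"
  by (simp add: tm_palindrome_def)

lemma nth_tm_palindrome: "i < 2 * n + 1 \<Longrightarrow> tm_palindrome n ! i = tm_mirror (int i - int n)"
  unfolding tm_palindrome_def by (simp del: upt_Suc)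

lemma palindrome_tm_palindrome: "palindrome (tm_palindrome n)"
  unfolding palindrome_def
proof (rule nth_equalityI)
  fix i assume "i < length (rev (tm_palindrome n))"
  then have i: "i < 2 * n + 1" by simp
  then have "rev (tm_palindrome n) ! i = tm_mirror (- (int i - int n))"
    by (simp add: rev_nth nth_tm_palindrome of_nat_diff)
  then show "rev (tm_palindrome n) ! i = tm_palindrome n ! i"
    using i by (simp only: tm_mirror_uminus nth_tm_palindrome)
qed simp

lemma tm_palindrome_factor_period_bound:
  assumes "sublist u (tm_palindrome n)" "0 < q" "has_period u q"
  shows "3 * length u \<le> 7 * q"
proof -
  obtain p r where w: "tm_palindrome n = p @ u @ r" using assms(1) by (auto simp: sublist_def)
  define s where "s = int (length p) - int n"
  have u_nth: "u ! x = tm_mirror (s + int x)" if "x < length u" for x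
  proof -
    have "length p + x < 2 * n + 1" using that arg_cong[OF w, of length] by simp
    then have "tm_palindrome n ! (length p + x) = tm_mirror (s + int x)"
      unfolding s_def by (simp add: nth_tm_palindrome algebra_simps)
    then show ?thesis using that by (simp add: w nth_append)
  qed
  have "period_on tm_mirror s (length u) q"
    unfolding period_on_def
  proof (intro allI impI)
    fix k assume k: "s \<le> k \<and> k + int q < s + int (length u)"
    define x where "x = nat (k - s)"
    have x: "k = s + int x" "x + q < length u" using k unfolding x_def by linarith+
    then show "tm_mirror k = tm_mirror (k + int q)"
      using assms(3) u_nth[of x] u_nth[of "x + q"] unfolding has_period_def by (simp add: add.assoc)
  qed
  then show ?thesis using tm_mirror_period_bound assms(2) by blast
qed

lemma thue_morse_6_to_9:
  "thue_morse 6 = False" "thue_morse 7 = True" "thue_morse 8 = True" "thue_morse 9 = False"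
  by (simp_all add: thue_morse.simps)

lemma tm_palindrome_centre:
  assumes "3 \<le> n"
  shows "has_period (take 7 (drop (n - 3) (tm_palindrome n))) 3"
proof -
  let ?v = "take 7 (drop (n - 3) (tm_palindrome n))"
  have v: "?v ! j = tm_mirror (int j - 3)" if "j < 7" for j
    using that assms by (simp add: nth_tm_palindrome)
  have "?v ! i = ?v ! (i + 3)" if "i < 4" for i
  proof -
    from that have "i = 0 \<or> i = 1 \<or> i = 2 \<or> i = 3" by auto
    then have "tm_mirror (int i - 3) = tm_mirror (int (i + 3) - 3)"
      by (elim disjE) (simp_all add: tm_mirror_def thue_morse_6_to_9)
    then show ?thesis using v[of i] v[of "i + 3"] that by simp
  qed
  then show ?thesis unfolding has_period_def by simp
qed

theorem mainTheorem3:
  fixes l :: nat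
  assumes "odd l" and "l \<ge> 7"
  shows "\<exists>w :: bool list. length w = l \<and> palindrome w \<and> crit_exp w = 7 / 3"
proof -
  obtain n where l: "l = 2 * n + 1" using assms(1) by (rule oddE)
  with assms(2) have "3 \<le> n" by simp
  have "crit_exp (tm_palindrome n) = 7 / 3"
  proof (rule crit_exp_eqI)
    fix u q assume "sublist u (tm_palindrome n)" "1 \<le> q" "q \<le> length u" "has_period u q"
    then show "of_nat (length u) / of_nat q \<le> (7 / 3 :: rat)"
      using tm_palindrome_factor_period_bound of_nat_divide_le_of_cross_mult[of 3 "length u" 7 q]
      by simp
  next
    show "sublist (take 7 (drop (n - 3) (tm_palindrome n))) (tm_palindrome n)"
      by (rule sublist_order.order.trans[OF sublist_take sublist_drop])
    show "has_period (take 7 (drop (n - 3) (tm_palindrome n))) 3"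
      using tm_palindrome_centre[OF \<open>3 \<le> n\<close>] .
  qed (use \<open>3 \<le> n\<close> in simp_all)
  then show ?thesis using l palindrome_tm_palindrome length_tm_palindrome by blast
qed

end
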